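(* Let $U\subseteq\mathbb{R}^d$ be an open convex set, let $f$ be a convex function finite on $U$ with $f_U:=\inf_{x'\in U}f(x')$ finite, let $g(\cdot)$ be a deterministic subgradient oracle ($g(x)\in\partial f(x)$ for each $x$), and let $L_0\ge0$, $L_1>0$. Then $$\|g(x)\|^2\le L_0^2+L_1(f(x)-f_U)\qquad\text{for all }x\in U$$ holds if and only if, for each $x\in U$, $$f(y)\le f(x)+\frac{L_1}{4}\|y-x\|^2+\|y-x\|\sqrt{L_1(f(x)-f_U)+L_0^2}\qquad\text{for all }y\in U.$$
   Context: $\partial f(x)=\{g: f(y)\ge f(x)+g^T(y-x)\ \forall y\}$; the oracle returns an arbitrary element of it. *)

theory Defs
  imports "HOL-Analysis.Analysis"
begin

definition subdifferential :: "('a::euclidean_space \<Rightarrow> real) \<Rightarrow> 'a set \<Rightarrow> 'a \<Rightarrow> 'a set" where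
  "subdifferential f U x = {g. \<forall>y\<in>U. f y \<ge> f x + g \<bullet> (y - x)}"

end

theory Submission
  imports Defs
begin

text \<open>Forward direction: \<open>\<psi> = sqrt (L0\<^sup>2 + L1 (f - f\<^sub>U))\<close> satisfies
  \<open>\<psi>(w)\<^sup>2 - \<psi>(z)\<^sup>2 = L1 (f w - f z) \<le> L1 \<parallel>g w\<parallel> \<parallel>w - z\<parallel> \<le> L1 \<psi>(w) \<parallel>w - z\<parallel>\<close>,
  which along a finely subdivided segment makes \<open>\<psi>\<close> grow by at most \<open>L1/2\<close> per unit length;
  squaring \<open>\<psi>(y) \<le> \<psi>(x) + L1 \<parallel>y - x\<parallel> / 2\<close> gives the upper bound on \<open>f y\<close>
  (to keep \<open>\<psi>\<close> bounded away from 0, \<open>L0\<^sup>2\<close> is first replaced by \<open>L0\<^sup>2 + \<epsilon>\<^sup>2\<close>).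
  Backward direction: testing the upper bound at \<open>y = x + s g(x)\<close> against the subgradient
  inequality gives \<open>\<parallel>g x\<parallel> \<le> L1 s \<parallel>g x\<parallel> / 4 + sqrt (L1 (f x - f\<^sub>U) + L0\<^sup>2)\<close>; let \<open>s \<rightarrow> 0\<close>.
  Only the subgradient inequality is used, never the convexity of \<open>f\<close> itself.\<close>

lemma le_add_of_sq_diff_le:
  fixes a b K d :: real
  assumes "0 < d" "d \<le> a" "0 \<le> K" "b\<^sup>2 - a\<^sup>2 \<le> K * b"
  shows "b \<le> a + K / 2 + K\<^sup>2 / (8 * d)"
proof -
  have a: "0 < a" using assms by linarith
  have "(b - K / 2)\<^sup>2 \<le> a\<^sup>2 + K\<^sup>2 / 4"
    using assms(4) by (simp add: power2_eq_square algebra_simps)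
  also have "\<dots> \<le> a\<^sup>2 + K\<^sup>2 / 4 + (K\<^sup>2 / (8 * a))\<^sup>2"
    by simp
  also have "\<dots> = (a + K\<^sup>2 / (8 * a))\<^sup>2"
    using a by (simp add: power2_eq_square field_simps)
  finally have "b - K / 2 \<le> a + K\<^sup>2 / (8 * a)"
    by (rule power2_le_imp_le) (use a in simp)
  moreover have "K\<^sup>2 / (8 * a) \<le> K\<^sup>2 / (8 * d)"
    using assms a by (intro divide_left_mono) auto
  ultimately show ?thesis by linarith
qed

lemma chain_le_add_of_sq_diff_le:
  fixes a :: "nat \<Rightarrow> real"
  assumes "0 < d" "0 \<le> K" "\<forall>k\<le>N. d \<le> a k"
    "\<forall>k<N. (a (Suc k))\<^sup>2 - (a k)\<^sup>2 \<le> K * a (Suc k)"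
  shows "a N \<le> a 0 + real N * (K / 2 + K\<^sup>2 / (8 * d))"
  using assms(3,4)
proof (induction N)
  case 0
  then show ?case by simp
next
  case (Suc n)
  then have "a n \<le> a 0 + real n * (K / 2 + K\<^sup>2 / (8 * d))" by simp
  moreover have "a (Suc n) \<le> a n + K / 2 + K\<^sup>2 / (8 * d)"
    using Suc.prems assms(1,2) by (intro le_add_of_sq_diff_le) auto
  ultimately show ?case by (simp add: distrib_right)
qed

lemma segment_growth_le_subdivision:
  fixes \<phi> :: "'a::real_normed_vector \<Rightarrow> real"
  assumes "convex U" "x \<in> U" "y \<in> U" "0 < d" "\<forall>z\<in>U. d \<le> \<phi> z" "0 \<le> K"
    and growth: "\<forall>z\<in>U. \<forall>w\<in>U. (\<phi> w)\<^sup>2 - (\<phi> z)\<^sup>2 \<le> K * norm (w - z) * \<phi> w"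
    and "1 \<le> N"
  shows "\<phi> y \<le> \<phi> x + K / 2 * norm (y - x) + (K * norm (y - x))\<^sup>2 / (8 * d) / real N"
proof -
  define z where "z k = x + (real k / real N) *\<^sub>R (y - x)" for k
  have z_in: "z k \<in> U" if "k \<le> N" for k
  proof -
    have "(1 - real k / real N) *\<^sub>R x + (real k / real N) *\<^sub>R y \<in> U"
      using assms(1-3) that \<open>1 \<le> N\<close> unfolding convex_alt by auto
    then show ?thesis by (simp add: z_def algebra_simps)
  qed
  have z_step: "norm (z (Suc k) - z k) = norm (y - x) / real N" for k
  proof -
    have "z (Suc k) - z k = (1 / real N) *\<^sub>R (y - x)"
      by (simp add: z_def add_divide_distrib scaleR_add_left)
    then show ?thesis by simp
  qed
  define K' where "K' = K * norm (y - x) / real N"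
  have "\<phi> (z N) \<le> \<phi> (z 0) + real N * (K' / 2 + K'\<^sup>2 / (8 * d))"
  proof (rule chain_le_add_of_sq_diff_le)
    show "\<forall>k<N. (\<phi> (z (Suc k)))\<^sup>2 - (\<phi> (z k))\<^sup>2 \<le> K' * \<phi> (z (Suc k))"
    proof (intro allI impI)
      fix k assume "k < N"
      then have "(\<phi> (z (Suc k)))\<^sup>2 - (\<phi> (z k))\<^sup>2 \<le> K * norm (z (Suc k) - z k) * \<phi> (z (Suc k))"
        using growth z_in by simp
      then show "(\<phi> (z (Suc k)))\<^sup>2 - (\<phi> (z k))\<^sup>2 \<le> K' * \<phi> (z (Suc k))"
        by (simp add: z_step K'_def)
    qed
  qed (use assms z_in in \<open>auto simp: K'_def\<close>)
  moreover have "z N = y" "z 0 = x"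
    using \<open>1 \<le> N\<close> by (auto simp: z_def)
  moreover have "real N * (K' / 2 + K'\<^sup>2 / (8 * d))
      = K / 2 * norm (y - x) + (K * norm (y - x))\<^sup>2 / (8 * d) / real N"
    using \<open>1 \<le> N\<close> by (simp add: K'_def field_simps power2_eq_square)
  ultimately show ?thesis by simp
qed

lemma segment_growth_le:
  fixes \<phi> :: "'a::real_normed_vector \<Rightarrow> real"
  assumes "convex U" "x \<in> U" "y \<in> U" "0 < d" "\<forall>z\<in>U. d \<le> \<phi> z" "0 \<le> K"
    and "\<forall>z\<in>U. \<forall>w\<in>U. (\<phi> w)\<^sup>2 - (\<phi> z)\<^sup>2 \<le> K * norm (w - z) * \<phi> w"
  shows "\<phi> y \<le> \<phi> x + K / 2 * norm (y - x)"
proof (rule field_le_epsilon)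
  fix \<epsilon> :: real
  assume "0 < \<epsilon>"
  define C where "C = (K * norm (y - x))\<^sup>2 / (8 * d)"
  have "0 \<le> C" using \<open>0 < d\<close> by (simp add: C_def)
  have "0 < \<epsilon> / (C + 1)"
    using \<open>0 < \<epsilon>\<close> \<open>0 \<le> C\<close> by simp
  then obtain N :: nat where "0 < N" and N: "inverse (real N) < \<epsilon> / (C + 1)"
    using ex_inverse_of_nat_less by blast
  have "C / real N = C * inverse (real N)"
    by (simp add: divide_inverse)
  also have "\<dots> \<le> C * (\<epsilon> / (C + 1))"
    using \<open>0 \<le> C\<close> N by (intro mult_left_mono) auto
  also have "\<dots> \<le> \<epsilon>"
    using \<open>0 \<le> C\<close> \<open>0 < \<epsilon>\<close> by (simp add: field_simps)
  finally have "C / real N \<le> \<epsilon>" .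
  moreover have "\<phi> y \<le> \<phi> x + K / 2 * norm (y - x) + C / real N"
    using segment_growth_le_subdivision[OF assms, of N] \<open>0 < N\<close> by (simp add: C_def)
  ultimately show "\<phi> y \<le> \<phi> x + K / 2 * norm (y - x) + \<epsilon>" by linarith
qed

lemma subgradient_growth_le_pos:
  fixes f :: "'a::euclidean_space \<Rightarrow> real" and g :: "'a \<Rightarrow> 'a"
  assumes "convex U" "x \<in> U" "y \<in> U" "\<forall>z\<in>U. m \<le> f z"
    and subgrad: "\<forall>z\<in>U. g z \<in> subdifferential f U z"
    and "0 < B" "0 < L1"
    and bound: "\<forall>z\<in>U. (norm (g z))\<^sup>2 \<le> B + L1 * (f z - m)"
  shows "f y \<le> f x + L1 / 4 * (norm (y - x))\<^sup>2 + norm (y - x) * sqrt (L1 * (f x - m) + B)"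
proof -
  define \<psi> where "\<psi> z = sqrt (L1 * (f z - m) + B)" for z
  define r where "r = norm (y - x)"
  have gap_nonneg: "0 \<le> L1 * (f z - m)" if "z \<in> U" for z
    using assms(4,7) that by simp
  have \<psi>_sq: "(\<psi> z)\<^sup>2 = L1 * (f z - m) + B" if "z \<in> U" for z
    using gap_nonneg[OF that] \<open>0 < B\<close> by (simp add: \<psi>_def)
  have \<psi>_ge: "sqrt B \<le> \<psi> z" if "z \<in> U" for z
    using gap_nonneg[OF that] by (simp add: \<psi>_def)
  have norm_g_le: "norm (g z) \<le> \<psi> z" if "z \<in> U" for z
    using bound that by (simp add: \<psi>_def real_le_rsqrt add.commute)
  have "\<psi> y \<le> \<psi> x + L1 / 2 * r"
    unfolding r_def
  proof (rule segment_growth_le[where d = "sqrt B"])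
    show "\<forall>z\<in>U. \<forall>w\<in>U. (\<psi> w)\<^sup>2 - (\<psi> z)\<^sup>2 \<le> L1 * norm (w - z) * \<psi> w"
    proof (intro ballI)
      fix z w assume "z \<in> U" "w \<in> U"
      have "f w - f z \<le> g w \<bullet> (w - z)"
        using subgrad \<open>z \<in> U\<close> \<open>w \<in> U\<close> by (force simp: subdifferential_def inner_diff_right)
      also have "\<dots> \<le> norm (g w) * norm (w - z)"
        by (rule norm_cauchy_schwarz)
      also have "\<dots> \<le> \<psi> w * norm (w - z)"
        using norm_g_le[OF \<open>w \<in> U\<close>] by (simp add: mult_right_mono)
      finally have "L1 * (f w - f z) \<le> L1 * (\<psi> w * norm (w - z))"
        using \<open>0 < L1\<close> by simp
      then show "(\<psi> w)\<^sup>2 - (\<psi> z)\<^sup>2 \<le> L1 * norm (w - z) * \<psi> w"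
        using \<psi>_sq[OF \<open>z \<in> U\<close>] \<psi>_sq[OF \<open>w \<in> U\<close>] by (simp add: algebra_simps)
    qed
  qed (use assms \<psi>_ge in auto)
  moreover have "0 \<le> \<psi> y"
    using \<psi>_ge[OF \<open>y \<in> U\<close>] \<open>0 < B\<close> by (meson less_imp_le order_trans real_sqrt_ge_zero)
  ultimately have "(\<psi> y)\<^sup>2 \<le> (\<psi> x + L1 / 2 * r)\<^sup>2"
    by (rule power_mono)
  then have "L1 * (f y - f x) \<le> L1 * (L1 / 4 * r\<^sup>2 + r * \<psi> x)"
    using \<psi>_sq[OF \<open>x \<in> U\<close>] \<psi>_sq[OF \<open>y \<in> U\<close>] by (simp add: power2_eq_square algebra_simps)
  then show ?thesis
    using \<open>0 < L1\<close> by (simp add: r_def \<psi>_def)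
qed

lemma subgradient_growth_le:
  fixes f :: "'a::euclidean_space \<Rightarrow> real" and g :: "'a \<Rightarrow> 'a"
  assumes "convex U" "x \<in> U" "y \<in> U" "\<forall>z\<in>U. m \<le> f z"
    and "\<forall>z\<in>U. g z \<in> subdifferential f U z"
    and "0 \<le> B" "0 < L1"
    and bound: "\<forall>z\<in>U. (norm (g z))\<^sup>2 \<le> B + L1 * (f z - m)"
  shows "f y \<le> f x + L1 / 4 * (norm (y - x))\<^sup>2 + norm (y - x) * sqrt (L1 * (f x - m) + B)"
proof (rule field_le_epsilon)
  fix \<epsilon> :: real
  assume "0 < \<epsilon>"
  define r where "r = norm (y - x)"
  define A where "A = L1 * (f x - m) + B"
  define \<delta> where "\<delta> = \<epsilon> / (r + 1)"
  have "0 < r + 1"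
    by (intro add_nonneg_pos) (simp_all add: r_def)
  have "0 < \<delta>" "0 \<le> A"
    using \<open>0 < \<epsilon>\<close> assms(2,4,6,7)
    by (simp_all add: \<delta>_def r_def A_def add_nonneg_pos)
  have "\<forall>z\<in>U. (norm (g z))\<^sup>2 \<le> (B + \<delta>\<^sup>2) + L1 * (f z - m)"
  proof
    fix z assume "z \<in> U"
    show "(norm (g z))\<^sup>2 \<le> (B + \<delta>\<^sup>2) + L1 * (f z - m)"
      using bspec[OF bound \<open>z \<in> U\<close>] zero_le_power2[of \<delta>] by linarith
  qed
  then have "f y \<le> f x + L1 / 4 * r\<^sup>2 + r * sqrt (A + \<delta>\<^sup>2)"
    using subgradient_growth_le_pos[OF assms(1-5) _ assms(7)] \<open>0 < \<delta>\<close> \<open>0 \<le> B\<close>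
    by (simp add: r_def A_def add.assoc add_nonneg_pos)
  also have "\<dots> \<le> f x + L1 / 4 * r\<^sup>2 + (r * sqrt A + (r + 1) * \<delta>)"
  proof -
    have "sqrt (A + \<delta>\<^sup>2) \<le> sqrt A + \<delta>"
      using \<open>0 \<le> A\<close> \<open>0 < \<delta>\<close> by (intro real_le_lsqrt) (auto simp: power2_eq_square algebra_simps)
    then have "r * sqrt (A + \<delta>\<^sup>2) \<le> r * (sqrt A + \<delta>)"
      by (simp add: r_def mult_left_mono)
    then show ?thesis
      using \<open>0 < \<delta>\<close> by (simp add: algebra_simps)
  qed
  also have "(r + 1) * \<delta> = \<epsilon>"
    using \<open>0 < r + 1\<close> by (simp add: \<delta>_def)
  finally show "f y \<le> f x + L1 / 4 * (norm (y - x))\<^sup>2 + norm (y - x) * sqrt (L1 * (f x - m) + B) + \<epsilon>"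
    by (simp add: r_def A_def)
qed

lemma subgradient_norm_le_of_upper_bound:
  fixes f :: "'a::euclidean_space \<Rightarrow> real"
  assumes "open U" "x \<in> U" and subgrad: "v \<in> subdifferential f U x" and "0 \<le> a" "0 \<le> c"
    and upper: "\<forall>y\<in>U. f y \<le> f x + a * (norm (y - x))\<^sup>2 + norm (y - x) * c"
  shows "norm v \<le> c"
proof -
  obtain e where "0 < e" and ball: "ball x e \<subseteq> U"
    using assms(1,2) open_contains_ball by blast
  define G where "G = norm v"
  have along_v: "G\<^sup>2 \<le> a * s * G\<^sup>2 + G * c" if "0 < s" "s * G < e" for s
  proof -
    define y where "y = x + s *\<^sub>R v"
    have "norm (y - x) = s * G" "v \<bullet> (y - x) = s * G\<^sup>2"
      using \<open>0 < s\<close> by (simp_all add: y_def G_def power2_norm_eq_inner)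
    moreover have "y \<in> U"
      using ball \<open>s * G < e\<close> \<open>norm (y - x) = s * G\<close> by (auto simp: dist_norm norm_minus_commute)
    ultimately have "s * G\<^sup>2 \<le> s * (a * s * G\<^sup>2 + G * c)"
      using subgrad upper unfolding subdifferential_def
      by (fastforce simp: power2_eq_square algebra_simps)
    then show ?thesis using \<open>0 < s\<close> by simp
  qed
  have "G\<^sup>2 \<le> G * c"
  proof (rule field_le_epsilon)
    fix \<epsilon> :: real
    assume "0 < \<epsilon>"
    define s where "s = min (e / (G + 1)) (\<epsilon> / (a * G\<^sup>2 + 1))"
    have "0 \<le> G" "0 \<le> a * G\<^sup>2" using \<open>0 \<le> a\<close> by (simp_all add: G_def)
    then have "0 < s" using \<open>0 < e\<close> \<open>0 < \<epsilon>\<close> by (simp add: s_def)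
    have "s * G < e"
    proof -
      have "s \<le> e / (G + 1)" by (simp add: s_def)
      then have "s * (G + 1) \<le> e"
        using \<open>0 \<le> G\<close> by (simp add: pos_le_divide_eq)
      then show ?thesis using \<open>0 < s\<close> by (simp add: algebra_simps)
    qed
    moreover have "a * s * G\<^sup>2 \<le> \<epsilon>"
    proof -
      have "s \<le> \<epsilon> / (a * G\<^sup>2 + 1)" by (simp add: s_def)
      then have "s * (a * G\<^sup>2 + 1) \<le> \<epsilon>"
        using \<open>0 \<le> a * G\<^sup>2\<close> by (simp add: pos_le_divide_eq)
      then show ?thesis using \<open>0 < s\<close> by (simp add: algebra_simps)
    qed
    ultimately show "G\<^sup>2 \<le> G * c + \<epsilon>"
      using along_v[OF \<open>0 < s\<close>] by linarith
  qed
  show ?thesis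
  proof (cases "G = 0")
    case True
    then show ?thesis using \<open>0 \<le> c\<close> by (simp add: G_def)
  next
    case False
    then have "0 < G" by (simp add: G_def)
    with \<open>G\<^sup>2 \<le> G * c\<close> show ?thesis
      by (simp add: G_def power2_eq_square mult_le_cancel_left_pos)
  qed
qed

theorem proposition2p6:
  fixes U :: "'a::euclidean_space set" and f :: "'a \<Rightarrow> real" and g :: "'a \<Rightarrow> 'a"
    and L0 L1 :: real
  assumes "open U" and "convex U" and "U \<noteq> {}"
    and "convex_on U f"
    and "bdd_below (f ` U)"
    and "\<forall>x\<in>U. g x \<in> subdifferential f U x"
    and "L0 \<ge> 0" and "L1 > 0"
  shows "(\<forall>x\<in>U. (norm (g x))\<^sup>2 \<le> L0\<^sup>2 + L1 * (f x - (INF x'\<in>U. f x'))) \<longleftrightarrow>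
         (\<forall>x\<in>U. \<forall>y\<in>U. f y \<le> f x + L1 / 4 * (norm (y - x))\<^sup>2
              + norm (y - x) * sqrt (L1 * (f x - (INF x'\<in>U. f x')) + L0\<^sup>2))"
    (is "?gradient_bound \<longleftrightarrow> ?upper_bound")
proof
  let ?m = "INF x'\<in>U. f x'"
  have above_inf: "\<forall>z\<in>U. ?m \<le> f z"
    using assms(5) by (auto intro: cINF_lower)
  show ?upper_bound if ?gradient_bound
  proof (intro ballI)
    fix x y assume "x \<in> U" "y \<in> U"
    show "f y \<le> f x + L1 / 4 * (norm (y - x))\<^sup>2 + norm (y - x) * sqrt (L1 * (f x - ?m) + L0\<^sup>2)"
      using subgradient_growth_le[OF assms(2) \<open>x \<in> U\<close> \<open>y \<in> U\<close> above_inf assms(6) _ assms(8)] that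
      by simp
  qed
  show ?gradient_bound if ?upper_bound
  proof
    fix x assume "x \<in> U"
    have "0 \<le> L1 * (f x - ?m) + L0\<^sup>2"
      using above_inf \<open>x \<in> U\<close> assms(8) by (simp add: add_nonneg_nonneg)
    have "norm (g x) \<le> sqrt (L1 * (f x - ?m) + L0\<^sup>2)"
    proof (rule subgradient_norm_le_of_upper_bound[OF assms(1) \<open>x \<in> U\<close>, where a = "L1 / 4"])
      show "\<forall>y\<in>U. f y \<le> f x + L1 / 4 * (norm (y - x))\<^sup>2 + norm (y - x) * sqrt (L1 * (f x - ?m) + L0\<^sup>2)"
        using that \<open>x \<in> U\<close> by simp
    qed (use assms(6,8) \<open>x \<in> U\<close> \<open>0 \<le> L1 * (f x - ?m) + L0\<^sup>2\<close> in auto)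
    then have "(norm (g x))\<^sup>2 \<le> (sqrt (L1 * (f x - ?m) + L0\<^sup>2))\<^sup>2"
      by (rule power_mono) simp
    then show "(norm (g x))\<^sup>2 \<le> L0\<^sup>2 + L1 * (f x - ?m)"
      using \<open>0 \<le> L1 * (f x - ?m) + L0\<^sup>2\<close> by (simp add: add.commute)
  qed
qed

end
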